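(* Let $n\ge2$ and let $Q_0\subset\mathbb{R}^n$ be a cube. For $N$ sufficiently large, $$s_N(R_{p,2}\log^\alpha)\lesssim\begin{cases}2^{-Nn(\frac{n+2}{2n}-\frac1p)}N^{-\alpha},& p>\frac{2n}{n+2},\ \alpha\in\mathbb{R},\\ N^{\frac12-\alpha},& p=\frac{2n}{n+2},\ \alpha>\frac12,\end{cases}$$ with implicit constants independent of $N$.
   Context: Cubes have sides parallel to axes; $\mathcal{D}(Q_0)$ is the family of dyadic subcubes of $Q_0$. A countable $\mathcal{Q}=(Q_i)\subset\mathcal{D}(Q_0)$ is sparse if there exist pairwise disjoint measurable $E_{Q_i}\subseteq Q_i$ with $|E_{Q_i}|\ge\frac12|Q_i|$; $S(Q_0)$ is the set of sparse families. For $f\in L^1(Q_0)$, $s_N(f)=\sup_{\mathcal{Q}\in S(Q_0)}\big[\sum_{Q\in\mathcal{Q},\,\ell(Q)\le2^{-(N-1)}\ell(Q_0)}\big(|Q|^{\frac1n-\frac12}\int_Q|f|\big)^2\big]^{1/2}$. The Riesz–Morrey–Tadmor space $R_{p,2}\log^\alpha(Q_0)$ is normed by $\|f\|=\sup\big\{\sum_i\big[(1-(\log|Q_i|)_-)^\alpha|Q_i|^{-1/p'}\int_{Q_i}|f|\big]^2\big\}^{1/2}$, the supremum over all families $(Q_i)$ of pairwise disjoint cubes in $\mathcal{D}(Q_0)$, where $(a)_-=\min\{a,0\}$ and $p'$ is the dual exponent; $s_N(R_{p,2}\log^\alpha)=\sup\{s_N(f):\|f\|_{R_{p,2}\log^\alpha(Q_0)}\le1\}$.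 *)

theory Defs
  imports "HOL-Analysis.Analysis"
begin

definition hcube :: "real^'n \<Rightarrow> real \<Rightarrow> (real^'n) set" where
  "hcube a l = {x. \<forall>i. a$i \<le> x$i \<and> x$i < a$i + l}"

text \<open>Dyadic subcubes of the cube Q0 = hcube a0 l0.\<close>
definition dyadic_cubes :: "real^'n \<Rightarrow> real \<Rightarrow> (real^'n) set set" where
  "dyadic_cubes a0 l0 =
     {hcube (a0 + (l0 / 2^k) *\<^sub>R (\<chi> i. real (j i))) (l0 / 2^k) | k j.
        \<forall>i. j i < (2::nat)^k}"

definition side_len :: "(real^'n) set \<Rightarrow> real" where
  "side_len Q = measure lebesgue Q powr (1 / real CARD('n))"

definition sparse_families :: "real^'n \<Rightarrow> real \<Rightarrow> (real^'n) set set set" where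
  "sparse_families a0 l0 =
     {S. countable S \<and> S \<subseteq> dyadic_cubes a0 l0 \<and>
        (\<exists>E. disjoint_family_on E S \<and>
             (\<forall>Q\<in>S. E Q \<in> sets lebesgue \<and> E Q \<subseteq> Q \<and>
                     measure lebesgue (E Q) \<ge> measure lebesgue Q / 2))}"

definition ennsqrt :: "ennreal \<Rightarrow> ennreal" where
  "ennsqrt x = (if x = top then top else ennreal (sqrt (enn2real x)))"

definition s_N :: "real^'n \<Rightarrow> real \<Rightarrow> nat \<Rightarrow> (real^'n \<Rightarrow> real) \<Rightarrow> ennreal" where
  "s_N a0 l0 N f =
     (SUP S \<in> sparse_families a0 l0.
        ennsqrt (\<Sum>\<^sub>\<infinity> Q \<in> {Q \<in> S. side_len Q \<le> 2 powr (- (real N - 1)) * l0}.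
           ennreal ((measure lebesgue Q powr (1 / real CARD('n) - 1/2)
                     * (LINT x:Q|lebesgue. \<bar>f x\<bar>))\<^sup>2)))"

text \<open>Norm of the Riesz--Morrey--Tadmor space; 1/p' is written as 1 - 1/p;
  (a)_- = min a 0, log is the natural logarithm.\<close>
definition rmt_norm :: "real^'n \<Rightarrow> real \<Rightarrow> real \<Rightarrow> real \<Rightarrow> (real^'n \<Rightarrow> real) \<Rightarrow> ennreal" where
  "rmt_norm a0 l0 p \<alpha> f =
     (SUP F \<in> {F. F \<subseteq> dyadic_cubes a0 l0 \<and> disjoint F}.
        ennsqrt (\<Sum>\<^sub>\<infinity> Q \<in> F.
           ennreal (((1 - min (ln (measure lebesgue Q)) 0) powr \<alpha>
                     * measure lebesgue Q powr (- (1 - 1 / p))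
                     * (LINT x:Q|lebesgue. \<bar>f x\<bar>))\<^sup>2)))"

definition s_N_RMT :: "real^'n \<Rightarrow> real \<Rightarrow> real \<Rightarrow> real \<Rightarrow> nat \<Rightarrow> ennreal" where
  "s_N_RMT a0 l0 p \<alpha> N =
     (SUP f \<in> {f. set_integrable lebesgue (hcube a0 l0) f \<and> rmt_norm a0 l0 p \<alpha> f \<le> 1}.
        s_N a0 l0 N f)"

end

theory Submission
  imports Defs "HOL-Real_Asymp.Real_Asymp"
begin

(* For a dyadic cube Q of generation k, the s_N term of Q is its Riesz-Morrey-Tadmor term
  multiplied by a factor depending only on |Q| = (l0 2^-k)^n, namely
  |Q|^(2 beta) (1 - (log |Q|)_-)^(-2 alpha) with beta = rmt_gap n p = (n+2)/(2n) - 1/p.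
  Cubes of one generation are pairwise disjoint, so when the RMT norm of f is at most 1
  their RMT terms sum to at most 1.  Hence the sum over any family of cubes of side at most
  2^(1-N) l0, sparse or not, is bounded by the sum of these factors over the generations
  k >= N - 1.  Since 1 - (log |Q|)_- grows like k n log 2, this is a geometric tail of order
  2^(-2 N n beta) N^(-2 alpha) when beta > 0, and a tail of the series of k^(-2 alpha), of
  order N^(1 - 2 alpha), when beta = 0 and alpha > 1/2. *)

section \<open>Dyadic cubes\<close>

lemma hcube_in_borel: "hcube (a::real^'n) l \<in> sets borel"
proof -
  have "hcube a l = (\<Inter>i. {x. a$i \<le> x$i} \<inter> {x. x$i < a$i + l})"
    unfolding hcube_def by auto
  also have "\<dots> \<in> sets borel"
    by (intro sets.countable_INT' sets.Int borel_closed borel_open closed_Collect_le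
        open_Collect_less continuous_intros) auto
  finally show ?thesis .
qed

lemma measure_hcube:
  fixes a :: "real^'n"
  assumes "l > 0"
  shows "hcube a l \<in> sets lebesgue" "measure lebesgue (hcube a l) = l ^ CARD('n)"
proof -
  have borel: "hcube a l \<in> sets lborel"
    using hcube_in_borel by simp
  then show "hcube a l \<in> sets lebesgue"
    by simp
  let ?b = "a + (\<chi> i. l)"
  have sandwich: "box a ?b \<subseteq> hcube a l" "hcube a l \<subseteq> cbox a ?b"
    unfolding hcube_def by (auto simp: mem_box_cart less_imp_le)
  have coord: "(\<chi> i. l) \<bullet> e = l" if "e \<in> (Basis :: (real^'n) set)" for e
    using that by (auto dest!: axis_inverse simp: inner_axis)
  have nonempty: "\<forall>e\<in>Basis. a \<bullet> e \<le> ?b \<bullet> e"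
    using assms coord by (simp add: inner_add_left)
  have volume: "(\<Prod>e\<in>Basis. (?b - a) \<bullet> e) = l ^ CARD('n)"
    using coord by simp
  have "emeasure lborel (hcube a l) = ennreal (l ^ CARD('n))"
  proof (rule antisym)
    show "emeasure lborel (hcube a l) \<le> ennreal (l ^ CARD('n))"
      using emeasure_mono[OF sandwich(2), of lborel] nonempty volume
      by (simp add: emeasure_lborel_cbox_eq)
    show "ennreal (l ^ CARD('n)) \<le> emeasure lborel (hcube a l)"
      using emeasure_mono[OF sandwich(1) borel] nonempty volume
      by (simp add: emeasure_lborel_box_eq)
  qed
  then show "measure lebesgue (hcube a l) = l ^ CARD('n)"
    using borel assms by (simp add: measure_def)
qed

definition dyadic_gen :: "real^'n \<Rightarrow> real \<Rightarrow> (real^'n) set \<Rightarrow> nat" where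
  "dyadic_gen a0 l0 Q = (SOME k. \<exists>j. (\<forall>i. j i < (2::nat)^k) \<and>
      Q = hcube (a0 + (l0 / 2^k) *\<^sub>R (\<chi> i. real (j i))) (l0 / 2^k))"

lemma dyadic_cube_genE:
  assumes "Q \<in> dyadic_cubes a0 l0"
  obtains j where "Q = hcube (a0 + (l0 / 2 ^ dyadic_gen a0 l0 Q) *\<^sub>R (\<chi> i. real (j i)))
                             (l0 / 2 ^ dyadic_gen a0 l0 Q)"
proof -
  have "\<exists>k j. (\<forall>i. j i < (2::nat)^k) \<and>
      Q = hcube (a0 + (l0 / 2^k) *\<^sub>R (\<chi> i. real (j i))) (l0 / 2^k)"
    using assms unfolding dyadic_cubes_def by blast
  then have "\<exists>j. (\<forall>i. j i < (2::nat) ^ dyadic_gen a0 l0 Q) \<and>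
      Q = hcube (a0 + (l0 / 2 ^ dyadic_gen a0 l0 Q) *\<^sub>R (\<chi> i. real (j i)))
                (l0 / 2 ^ dyadic_gen a0 l0 Q)"
    unfolding dyadic_gen_def by (rule someI_ex)
  then show ?thesis
    using that by blast
qed

lemma measure_dyadic_cube:
  fixes a0 :: "real^'n"
  assumes "Q \<in> dyadic_cubes a0 l0" "l0 > 0"
  shows "Q \<in> sets lebesgue" "measure lebesgue Q = (l0 / 2 ^ dyadic_gen a0 l0 Q) ^ CARD('n)"
proof -
  define s where "s = l0 / 2 ^ dyadic_gen a0 l0 Q"
  obtain j where Q: "Q = hcube (a0 + s *\<^sub>R (\<chi> i. real (j i))) s"
    using dyadic_cube_genE[OF assms(1)] unfolding s_def .
  have "s > 0"
    using assms(2) by (simp add: s_def)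
  then show "Q \<in> sets lebesgue" "measure lebesgue Q = s ^ CARD('n)"
    unfolding Q by (rule measure_hcube)+
qed

lemma side_len_dyadic_cube:
  fixes a0 :: "real^'n"
  assumes "Q \<in> dyadic_cubes a0 l0" "l0 > 0"
  shows "side_len Q = l0 / 2 ^ dyadic_gen a0 l0 Q"
  using assms by (simp add: side_len_def measure_dyadic_cube powr_realpow[symmetric] powr_powr)

lemma dyadic_gen_ge_of_side_len_le:
  fixes a0 :: "real^'n"
  assumes "Q \<in> dyadic_cubes a0 l0" "l0 > 0" "side_len Q \<le> 2 powr (- (real N - 1)) * l0"
  shows "N - 1 \<le> dyadic_gen a0 l0 Q"
proof -
  have "(2::real) powr (- real (dyadic_gen a0 l0 Q)) * l0 \<le> 2 powr (- (real N - 1)) * l0"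
    using assms by (simp add: side_len_dyadic_cube powr_minus powr_realpow divide_inverse mult.commute)
  then have "(2::real) powr (- real (dyadic_gen a0 l0 Q)) \<le> 2 powr (- (real N - 1))"
    using assms(2) by simp
  then show ?thesis
    by simp
qed

lemma dyadic_cubes_same_gen_disjoint:
  assumes "Q1 \<in> dyadic_cubes a0 l0" "Q2 \<in> dyadic_cubes a0 l0" "l0 > 0"
    and "dyadic_gen a0 l0 Q1 = dyadic_gen a0 l0 Q2" "Q1 \<noteq> Q2"
  shows "Q1 \<inter> Q2 = {}"
proof (rule ccontr)
  define s :: real where "s = l0 / 2 ^ dyadic_gen a0 l0 Q1"
  have s: "s > 0"
    using assms(3) by (simp add: s_def)
  obtain j1 where j1: "Q1 = hcube (a0 + s *\<^sub>R (\<chi> i. real (j1 i))) s"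
    using dyadic_cube_genE[OF assms(1)] unfolding s_def by blast
  obtain j2 where j2: "Q2 = hcube (a0 + s *\<^sub>R (\<chi> i. real (j2 i))) s"
    using dyadic_cube_genE[OF assms(2)] unfolding s_def assms(4) by blast
  have "j1 \<noteq> j2"
    using j1 j2 assms(5) by auto
  then obtain i where i: "j1 i \<noteq> j2 i"
    by auto
  assume "Q1 \<inter> Q2 \<noteq> {}"
  then obtain x where "x \<in> Q1" "x \<in> Q2"
    by auto
  then have "a0$i + s * j1 i \<le> x$i" "x$i < a0$i + s * j1 i + s"
    "a0$i + s * j2 i \<le> x$i" "x$i < a0$i + s * j2 i + s"
    unfolding j1 j2 hcube_def by auto
  then have "s * j1 i < s * (j2 i + 1)" "s * j2 i < s * (j1 i + 1)"
    by (auto simp: algebra_simps)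
  then have "real (j1 i) < j2 i + 1" "real (j2 i) < j1 i + 1"
    using s by (auto simp: mult_less_cancel_left_pos)
  then show False
    using i by linarith
qed

section \<open>Comparison of the s_N and RMT terms of a cube\<close>

definition rmt_gap :: "real \<Rightarrow> real \<Rightarrow> real" where
  "rmt_gap n p = (n + 2) / (2 * n) - 1 / p"

definition rmt_factor :: "real \<Rightarrow> real \<Rightarrow> real \<Rightarrow> real \<Rightarrow> real" where
  "rmt_factor n p \<alpha> m = m powr (2 * rmt_gap n p) * (1 - min (ln m) 0) powr (-2 * \<alpha>)"

lemma s_N_term_eq_rmt_factor_mult:
  fixes m n p \<alpha> I :: real
  assumes "m > 0" "n > 0"
  shows "(m powr (1/n - 1/2) * I)\<^sup>2 =
    rmt_factor n p \<alpha> m * ((1 - min (ln m) 0) powr \<alpha> * m powr (- (1 - 1 / p)) * I)\<^sup>2"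
proof -
  define w where "w = 1 - min (ln m) 0"
  have "w > 0"
    by (simp add: w_def)
  then have w: "w powr (-2 * \<alpha>) * w powr \<alpha> * w powr \<alpha> = 1"
    by (simp add: powr_add[symmetric])
  have "2 * rmt_gap n p + - (1 - 1 / p) + - (1 - 1 / p) = (1/n - 1/2) + (1/n - 1/2)"
    using assms(2) by (simp add: rmt_gap_def field_simps)
  then have m: "m powr (1/n - 1/2) * m powr (1/n - 1/2) =
      m powr (2 * rmt_gap n p) * m powr (- (1 - 1 / p)) * m powr (- (1 - 1 / p))"
    unfolding powr_add[symmetric] by (rule arg_cong[symmetric])
  have "(m powr (1/n - 1/2) * I)\<^sup>2 =
      (m powr (2 * rmt_gap n p) * m powr (- (1 - 1 / p)) * m powr (- (1 - 1 / p)))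
      * (w powr (-2 * \<alpha>) * w powr \<alpha> * w powr \<alpha>) * I\<^sup>2"
    unfolding w m[symmetric] by (simp add: power2_eq_square algebra_simps)
  also have "\<dots> = rmt_factor n p \<alpha> m * (w powr \<alpha> * m powr (- (1 - 1 / p)) * I)\<^sup>2"
    by (simp add: rmt_factor_def w_def power2_eq_square algebra_simps)
  finally show ?thesis
    by (simp add: w_def)
qed

lemma ennsqrt_ennreal_le_oneD: "x \<ge> 0 \<Longrightarrow> ennsqrt (ennreal x) \<le> 1 \<Longrightarrow> x \<le> 1"
  by (simp add: ennsqrt_def)

lemma ennsqrt_le_ennreal:
  assumes "b \<ge> 0" "X \<le> ennreal (b\<^sup>2)"
  shows "ennsqrt X \<le> ennreal b"
proof -
  obtain x where x: "X = ennreal x" "x \<ge> 0"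
    using assms(2) by (cases X) (auto simp: top_unique)
  then have "sqrt x \<le> b"
    using assms real_le_lsqrt by auto
  then show ?thesis
    using x by (simp add: ennsqrt_def ennreal_leI)
qed

lemma sum_rmt_terms_le_one:
  fixes a0 :: "real^'n"
  assumes "rmt_norm a0 l0 p \<alpha> f \<le> 1" "finite F" "F \<subseteq> dyadic_cubes a0 l0" "disjoint F"
  shows "(\<Sum>Q\<in>F. ((1 - min (ln (measure lebesgue Q)) 0) powr \<alpha>
                     * measure lebesgue Q powr (- (1 - 1 / p))
                     * (LINT x:Q|lebesgue. \<bar>f x\<bar>))\<^sup>2) \<le> 1"
    (is "(\<Sum>Q\<in>F. ?term Q) \<le> 1")
proof -
  have "ennsqrt (\<Sum>\<^sub>\<infinity> Q \<in> F. ennreal (?term Q)) \<le> rmt_norm a0 l0 p \<alpha> f"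
    unfolding rmt_norm_def using assms(3,4) by (intro SUP_upper) auto
  also have "(\<Sum>\<^sub>\<infinity> Q \<in> F. ennreal (?term Q)) = ennreal (\<Sum>Q\<in>F. ?term Q)"
    using assms(2) by simp
  finally show ?thesis
    using assms(1) by (intro ennsqrt_ennreal_le_oneD) (auto intro: sum_nonneg)
qed

lemma sum_s_N_terms_le_sum_rmt_factor:
  fixes a0 :: "real^'n"
  assumes "rmt_norm a0 l0 p \<alpha> f \<le> 1" "l0 > 0" "finite T" "T \<subseteq> dyadic_cubes a0 l0"
  shows "(\<Sum>Q\<in>T. (measure lebesgue Q powr (1 / real CARD('n) - 1/2)
                     * (LINT x:Q|lebesgue. \<bar>f x\<bar>))\<^sup>2)
     \<le> (\<Sum>k\<in>dyadic_gen a0 l0 ` T. rmt_factor (real CARD('n)) p \<alpha> ((l0 / 2^k) ^ CARD('n)))"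
proof -
  let ?gen = "dyadic_gen a0 l0"
  let ?c = "\<lambda>k. rmt_factor (real CARD('n)) p \<alpha> ((l0 / 2^k) ^ CARD('n))"
  let ?term = "\<lambda>Q. ((1 - min (ln (measure lebesgue Q)) 0) powr \<alpha>
                     * measure lebesgue Q powr (- (1 - 1 / p))
                     * (LINT x:Q|lebesgue. \<bar>f x\<bar>))\<^sup>2"
  have factor: "(measure lebesgue Q powr (1 / real CARD('n) - 1/2)
                  * (LINT x:Q|lebesgue. \<bar>f x\<bar>))\<^sup>2 = ?c (?gen Q) * ?term Q" if "Q \<in> T" for Q
    using s_N_term_eq_rmt_factor_mult[of "measure lebesgue Q" "real CARD('n)"]
      measure_dyadic_cube(2)[of Q] that assms(2,4) by auto
  have generation: "(\<Sum>Q\<in>{Q\<in>T. ?gen Q = k}. ?c (?gen Q) * ?term Q) \<le> ?c k" for k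
  proof -
    have "(\<Sum>Q\<in>{Q\<in>T. ?gen Q = k}. ?term Q) \<le> 1"
    proof (rule sum_rmt_terms_le_one[OF assms(1)])
      show "disjoint {Q\<in>T. ?gen Q = k}"
        unfolding disjoint_def using dyadic_cubes_same_gen_disjoint[OF _ _ assms(2)] assms(4)
        by blast
    qed (use assms(3,4) in auto)
    moreover have "?c k \<ge> 0"
      by (simp add: rmt_factor_def)
    ultimately show ?thesis
      by (simp add: sum_distrib_left[symmetric] mult_left_le)
  qed
  have "(\<Sum>Q\<in>T. (measure lebesgue Q powr (1 / real CARD('n) - 1/2)
                     * (LINT x:Q|lebesgue. \<bar>f x\<bar>))\<^sup>2) = (\<Sum>Q\<in>T. ?c (?gen Q) * ?term Q)"
    using factor by (rule sum.cong[OF refl])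
  also have "\<dots> = (\<Sum>k\<in>?gen ` T. \<Sum>Q\<in>{Q\<in>T. ?gen Q = k}. ?c (?gen Q) * ?term Q)"
    using assms(3) by (intro sum.group[symmetric]) auto
  also have "\<dots> \<le> (\<Sum>k\<in>?gen ` T. ?c k)"
    using generation by (rule sum_mono)
  finally show ?thesis .
qed

lemma s_N_le_of_rmt_factor_tail_bound:
  fixes a0 :: "real^'n"
  assumes "l0 > 0" "rmt_norm a0 l0 p \<alpha> f \<le> 1" "b \<ge> 0"
    and tail: "\<And>K. finite K \<Longrightarrow> K \<subseteq> {N - 1..} \<Longrightarrow>
      (\<Sum>k\<in>K. rmt_factor (real CARD('n)) p \<alpha> ((l0 / 2^k) ^ CARD('n))) \<le> b\<^sup>2"
  shows "s_N a0 l0 N f \<le> ennreal b"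
  unfolding s_N_def
proof (rule SUP_least)
  fix S assume "S \<in> sparse_families a0 l0"
  then have dyadic: "S \<subseteq> dyadic_cubes a0 l0"
    by (simp add: sparse_families_def)
  let ?T = "{Q \<in> S. side_len Q \<le> 2 powr (- (real N - 1)) * l0}"
  let ?term = "\<lambda>Q. (measure lebesgue Q powr (1 / real CARD('n) - 1/2)
                     * (LINT x:Q|lebesgue. \<bar>f x\<bar>))\<^sup>2"
  have "(\<Sum>\<^sub>\<infinity> Q \<in> ?T. ennreal (?term Q)) \<le> ennreal (b\<^sup>2)"
  proof (rule infsum_le_finite_sums)
    show "(\<lambda>Q. ennreal (?term Q)) summable_on ?T"
      by (rule nonneg_summable_on_complete) simp
    fix F assume F: "finite F" "F \<subseteq> ?T"
    have "(\<Sum>Q\<in>F. ?term Q) \<le> b\<^sup>2"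
    proof (rule order_trans[OF sum_s_N_terms_le_sum_rmt_factor[OF assms(2,1) F(1)]])
      show "F \<subseteq> dyadic_cubes a0 l0"
        using F(2) dyadic by blast
      then have "dyadic_gen a0 l0 ` F \<subseteq> {N - 1..}"
        using F(2) dyadic_gen_ge_of_side_len_le[OF _ assms(1)] by fastforce
      then show "(\<Sum>k\<in>dyadic_gen a0 l0 ` F. rmt_factor (real CARD('n)) p \<alpha> ((l0 / 2^k) ^ CARD('n)))
          \<le> b\<^sup>2"
        using F(1) by (intro tail) auto
    qed
    then show "(\<Sum>Q\<in>F. ennreal (?term Q)) \<le> ennreal (b\<^sup>2)"
      by (simp add: ennreal_leI)
  qed
  then show "ennsqrt (\<Sum>\<^sub>\<infinity> Q \<in> ?T. ennreal (?term Q)) \<le> ennreal b"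
    by (rule ennsqrt_le_ennreal[OF assms(3)])
qed

lemma s_N_RMT_le_of_rmt_factor_tail_bound:
  fixes a0 :: "real^'n"
  assumes "l0 > 0" "b \<ge> 0"
    and "\<And>K. finite K \<Longrightarrow> K \<subseteq> {N - 1..} \<Longrightarrow>
      (\<Sum>k\<in>K. rmt_factor (real CARD('n)) p \<alpha> ((l0 / 2^k) ^ CARD('n))) \<le> b\<^sup>2"
  shows "s_N_RMT a0 l0 p \<alpha> N \<le> ennreal b"
  unfolding s_N_RMT_def using s_N_le_of_rmt_factor_tail_bound[OF assms(1) _ assms(2,3)]
  by (auto intro: SUP_least)

section \<open>Tail sums\<close>

lemma finite_subset_atLeastE:
  fixes K :: "nat set"
  assumes "finite K" "K \<subseteq> {M..}"
  obtains n where "M \<le> n" "K \<subseteq> {M..n}"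
proof -
  obtain n where "\<forall>k\<in>K. k \<le> n"
    using assms(1) finite_nat_set_iff_bounded_le by blast
  then show ?thesis
    using assms(2) that[of "max M n"] by fastforce
qed

lemma geometric_tail_sum_le:
  fixes q :: real
  assumes "0 \<le> q" "q < 1" "finite K" "K \<subseteq> {M..}"
  shows "(\<Sum>k\<in>K. q^k) \<le> q^M / (1 - q)"
proof -
  obtain n where n: "M \<le> n" "K \<subseteq> {M..n}"
    using finite_subset_atLeastE[OF assms(3,4)] .
  have "(\<Sum>k\<in>K. q^k) \<le> (\<Sum>k=M..n. q^k)"
    using n assms(1) by (intro sum_mono2) auto
  also have "\<dots> = (q^M - q^Suc n) / (1 - q)"
    using sum_gp_multiplied[OF n(1), of q] assms(2) by (simp add: field_simps)
  also have "\<dots> \<le> q^M / (1 - q)"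
    using assms(1,2) by (intro divide_right_mono) auto
  finally show ?thesis .
qed

lemma powr_le_powr_diff_div:
  fixes s x :: real
  assumes "s < 0" "x > 1"
  shows "x powr (s - 1) \<le> ((x - 1) powr s - x powr s) / (- s)"
proof -
  have "\<forall>y. x - 1 \<le> y \<and> y \<le> x \<longrightarrow>
      ((\<lambda>z. z powr s) has_real_derivative s * y powr (s - 1)) (at y)"
    using assms by (auto intro!: derivative_eq_intros)
  then obtain z where z: "x - 1 < z" "z < x" "x powr s - (x - 1) powr s = s * z powr (s - 1)"
    using MVT2[of "x - 1" x "\<lambda>z. z powr s" "\<lambda>y. s * y powr (s - 1)"] by auto
  have "x powr (s - 1) \<le> z powr (s - 1)"
    using z assms by (intro powr_mono2') auto
  also have "\<dots> = ((x - 1) powr s - x powr s) / (- s)"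
    using z(3) assms(1) by (simp add: field_simps)
  finally show ?thesis .
qed

lemma powr_tail_sum_le:
  fixes s :: real
  assumes "s < 0" "M \<ge> 2" "finite K" "K \<subseteq> {M..}"
  shows "(\<Sum>k\<in>K. real k powr (s - 1)) \<le> (real M - 1) powr s / (- s)"
proof -
  obtain n where n: "M \<le> n" "K \<subseteq> {M..n}"
    using finite_subset_atLeastE[OF assms(3,4)] .
  define g where "g i = (real i - 1) powr s / s" for i :: nat
  have "(\<Sum>k\<in>K. real k powr (s - 1)) \<le> (\<Sum>k=M..n. real k powr (s - 1))"
    using n by (intro sum_mono2) auto
  also have "\<dots> \<le> (\<Sum>k=M..n. g (Suc k) - g k)"
  proof (rule sum_mono)
    fix k assume "k \<in> {M..n}"
    then have "real k > 1"
      using assms(2) by simp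
    then have "real k powr (s - 1) \<le> ((real k - 1) powr s - real k powr s) / (- s)"
      by (rule powr_le_powr_diff_div[OF assms(1)])
    also have "\<dots> = g (Suc k) - g k"
      by (simp add: g_def diff_divide_distrib)
    finally show "real k powr (s - 1) \<le> g (Suc k) - g k" .
  qed
  also have "\<dots> = g (Suc n) - g M"
    using n(1) by (intro sum_Suc_diff) simp
  also have "\<dots> \<le> (real M - 1) powr s / (- s)"
    using assms(1) by (simp add: g_def divide_nonneg_neg)
  finally show ?thesis .
qed

lemma powr_tail_sum_le_powr:
  fixes s :: real
  assumes "s < 0" "N \<ge> 4" "finite K" "K \<subseteq> {N - 1..}"
  shows "(\<Sum>k\<in>K. real k powr (s - 1)) \<le> 2 powr (- s) / (- s) * real N powr s"
proof -
  have "(\<Sum>k\<in>K. real k powr (s - 1)) \<le> (real (N - 1) - 1) powr s / (- s)"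
    using powr_tail_sum_le[OF assms(1) _ assms(3,4)] assms(2) by simp
  also have "\<dots> \<le> (real N / 2) powr s / (- s)"
    using assms(1,2) by (intro divide_right_mono powr_mono2') auto
  also have "(real N / 2) powr s = real N powr s / 2 powr s"
    by (rule powr_divide)
  also have "\<dots> / (- s) = 2 powr (- s) / (- s) * real N powr s"
    by (simp add: powr_minus divide_inverse)
  finally show ?thesis .
qed

lemma powr_mult_power_bounded:
  fixes a q :: real
  assumes "0 < q" "q < 1"
  shows "\<exists>B>0. \<forall>j. (1 + real j) powr a * q^j \<le> B"
proof -
  have "(\<lambda>j. (1 + real j) powr a * q^j) \<longlonglongrightarrow> 0"
    using assms by real_asymp
  then have "Bseq (\<lambda>j. (1 + real j) powr a * q^j)"
    using convergent_imp_Bseq convergentI by blast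
  then obtain B where "B > 0" "\<And>j. norm ((1 + real j) powr a * q^j) \<le> B"
    unfolding Bseq_def by blast
  then show ?thesis
    by (intro exI[of _ B]) (auto simp: abs_le_iff)
qed

lemma shifted_powr_mult_power_tail_sum_bounded:
  fixes a r :: real
  assumes "0 < r" "r < 1"
  shows "\<exists>A>0. \<forall>M K. finite K \<longrightarrow> K \<subseteq> {M..} \<longrightarrow>
           (\<Sum>k\<in>K. (1 + real (k - M)) powr a * r^(k - M)) \<le> A"
proof -
  define \<rho> where "\<rho> = sqrt r"
  have \<rho>: "0 < \<rho>" "\<rho> < 1" "r = \<rho>\<^sup>2"
    using assms by (auto simp: \<rho>_def)
  obtain B where B: "B > 0" "\<And>j. (1 + real j) powr a * \<rho>^j \<le> B"
    using powr_mult_power_bounded[OF \<rho>(1,2)] by blast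
  have "(\<Sum>k\<in>K. (1 + real (k - M)) powr a * r^(k - M)) \<le> B / (1 - \<rho>)"
    if K: "finite K" "K \<subseteq> {M..}" for M K
  proof -
    have "(\<Sum>k\<in>K. (1 + real (k - M)) powr a * r^(k - M)) \<le> (\<Sum>k\<in>K. B * \<rho>^(k - M))"
    proof (rule sum_mono)
      fix k
      have "(1 + real (k - M)) powr a * r^(k - M) = ((1 + real (k - M)) powr a * \<rho>^(k - M)) * \<rho>^(k - M)"
        by (simp add: \<rho>(3) power_mult_distrib power2_eq_square flip: power_mult)
      also have "\<dots> \<le> B * \<rho>^(k - M)"
        using B(2) \<rho> by (intro mult_right_mono) auto
      finally show "(1 + real (k - M)) powr a * r^(k - M) \<le> B * \<rho>^(k - M)" .
    qed
    also have "\<dots> = B * (\<Sum>k\<in>K. \<rho>^k) / \<rho>^M"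
      using K(2) \<rho>(1) by (auto simp: sum_distrib_left sum_divide_distrib power_diff intro!: sum.cong)
    also have "\<dots> \<le> B * (\<rho>^M / (1 - \<rho>)) / \<rho>^M"
      using geometric_tail_sum_le[of \<rho> K M] K \<rho> B(1) by (intro divide_right_mono mult_left_mono) auto
    also have "\<dots> = B / (1 - \<rho>)"
      using \<rho>(1) by simp
    finally show ?thesis .
  qed
  moreover have "B / (1 - \<rho>) > 0"
    using B(1) \<rho>(2) by simp
  ultimately show ?thesis
    by blast
qed

lemma powr_le_of_ratio_bounds:
  fixes x y c t :: real
  assumes "0 < y" "y / 2 \<le> x" "x \<le> c * y" "1 \<le> c"
  shows "x powr t \<le> (2 * c) powr \<bar>t\<bar> * y powr t"
proof (cases "t \<ge> 0")
  case True
  have "x powr t \<le> (c * y) powr t"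
    using assms True by (intro powr_mono2) auto
  also have "\<dots> = c powr t * y powr t"
    using assms by (simp add: powr_mult)
  also have "\<dots> \<le> (2 * c) powr \<bar>t\<bar> * y powr t"
    using assms True by (intro mult_right_mono) (auto intro: powr_mono2)
  finally show ?thesis .
next
  case False
  have "x powr t \<le> (y / 2) powr t"
    using assms False by (intro powr_mono2') auto
  also have "\<dots> = 2 powr \<bar>t\<bar> * y powr t"
    using False by (simp add: powr_divide powr_minus_divide)
  also have "\<dots> \<le> (2 * c) powr \<bar>t\<bar> * y powr t"
    using assms by (intro mult_right_mono) (auto intro: powr_mono2)
  finally show ?thesis .
qed

lemma power_mult_powr_tail_sum_le:
  fixes r t :: real
  assumes "0 < r" "r < 1"
  shows "\<exists>B>0. \<forall>N\<ge>2. \<forall>K. finite K \<longrightarrow> K \<subseteq> {N - 1..} \<longrightarrow>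
           (\<Sum>k\<in>K. r^k * real k powr t) \<le> B * (r^N * real N powr t)"
proof -
  obtain A where A: "A > 0" and tail: "\<And>M K. finite K \<Longrightarrow> K \<subseteq> {M..} \<Longrightarrow>
      (\<Sum>k\<in>K. (1 + real (k - M)) powr \<bar>t\<bar> * r^(k - M)) \<le> A"
    using shifted_powr_mult_power_tail_sum_bounded[OF assms, of "\<bar>t\<bar>"] by blast
  define B where "B = 2 powr \<bar>t\<bar> * A / r"
  have "(\<Sum>k\<in>K. r^k * real k powr t) \<le> B * (r^N * real N powr t)"
    if N: "N \<ge> 2" and K: "finite K" "K \<subseteq> {N - 1..}" for N K
  proof -
    define E where "E = 2 powr \<bar>t\<bar> * r^(N - 1) * real N powr t"
    have "r^k * real k powr t \<le> E * ((1 + real (k - (N - 1))) powr \<bar>t\<bar> * r^(k - (N - 1)))"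
      if "k \<in> K" for k
    proof -
      define j where "j = k - (N - 1)"
      have k: "k = N - 1 + j"
        using that K(2) by (auto simp: j_def)
      have "real k powr t \<le> (2 * (1 + real j)) powr \<bar>t\<bar> * real N powr t"
        using N k mult_right_mono[of 1 "real N" "real j"]
        by (intro powr_le_of_ratio_bounds) (auto simp: algebra_simps)
      then have "r^k * real k powr t \<le> r^k * ((2 * (1 + real j)) powr \<bar>t\<bar> * real N powr t)"
        using assms(1) by (intro mult_left_mono) auto
      also have "\<dots> = E * ((1 + real j) powr \<bar>t\<bar> * r^j)"
        unfolding E_def k power_add powr_mult by (simp add: mult_ac)
      finally show ?thesis
        unfolding j_def .
    qed
    then have "(\<Sum>k\<in>K. r^k * real k powr t)
        \<le> E * (\<Sum>k\<in>K. (1 + real (k - (N - 1))) powr \<bar>t\<bar> * r^(k - (N - 1)))"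
      by (simp add: sum_distrib_left sum_mono)
    also have "\<dots> \<le> E * A"
      using tail[OF K] assms by (intro mult_left_mono) (auto simp: E_def)
    also have "\<dots> = B * (r^N * real N powr t)"
    proof -
      have "r^N = r * r^(N - 1)"
        using N by (cases N) auto
      then show ?thesis
        using assms by (simp add: B_def E_def)
    qed
    finally show ?thesis .
  qed
  moreover have "B > 0"
    using A assms by (simp add: B_def)
  ultimately show ?thesis
    by blast
qed

lemma log_weight_dyadic_powr_le:
  fixes n :: nat and l0 t :: real
  assumes "n \<ge> 1" "l0 > 0"
  shows "\<exists>D>0. \<exists>K. \<forall>k\<ge>K. (1 - min (ln ((l0 / 2^k) ^ n)) 0) powr t \<le> D * real k powr t"
proof -
  define D where "D = (n * ln 2) powr t + 1"
  have "(\<lambda>k. (1 - min (ln ((l0 / 2^k) ^ n)) 0) powr t / real k powr t) \<longlonglongrightarrow> (n * ln 2) powr t"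
    using assms by real_asymp
  then have "eventually (\<lambda>k. (1 - min (ln ((l0 / 2^k) ^ n)) 0) powr t / real k powr t < D) sequentially"
    by (rule order_tendstoD) (simp add: D_def)
  then obtain K where K: "\<And>k. k \<ge> K \<Longrightarrow> (1 - min (ln ((l0 / 2^k) ^ n)) 0) powr t / real k powr t < D"
    unfolding eventually_sequentially by blast
  have "(1 - min (ln ((l0 / 2^k) ^ n)) 0) powr t \<le> D * real k powr t" if "k \<ge> max K 1" for k
    using K[of k] that by (simp add: divide_less_eq)
  moreover have "D > 0"
    by (simp add: D_def add_nonneg_pos)
  ultimately show ?thesis
    by blast
qed

lemma rmt_factor_dyadic:
  fixes n k :: nat
  assumes "l0 > 0"
  shows "rmt_factor (real n) p \<alpha> ((l0 / 2^k) ^ n) =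
    l0 powr (2 * n * rmt_gap n p) * (2 powr (- 2 * n * rmt_gap n p)) ^ k
    * (1 - min (ln ((l0 / 2^k) ^ n)) 0) powr (-2 * \<alpha>)"
proof -
  define x where "x = 2 * n * rmt_gap n p"
  have "((l0 / 2^k) ^ n) powr (2 * rmt_gap n p) = (l0 / 2^k) powr x"
    using assms by (simp add: x_def powr_realpow[symmetric] powr_powr mult_ac)
  also have "\<dots> = l0 powr x / (2 powr x) ^ k"
    using assms by (simp add: powr_divide powr_realpow[symmetric] powr_powr mult.commute)
  also have "\<dots> = l0 powr x * (2 powr (- x)) ^ k"
    by (simp add: powr_minus divide_inverse power_inverse)
  finally show ?thesis
    by (simp add: rmt_factor_def x_def)
qed

lemma rmt_factor_tail_sum_supercritical:
  fixes n :: nat and l0 p \<alpha> :: real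
  assumes n: "n \<ge> 1" and l0: "l0 > 0" and gap: "rmt_gap n p > 0"
  shows "\<exists>C>0. \<exists>N0. \<forall>N\<ge>N0. \<forall>K. finite K \<longrightarrow> K \<subseteq> {N - 1..} \<longrightarrow>
     (\<Sum>k\<in>K. rmt_factor n p \<alpha> ((l0 / 2^k) ^ n))
       \<le> (C * (2 powr (- real N * n * rmt_gap n p) * real N powr (- \<alpha>)))\<^sup>2"
proof -
  define x where "x = 2 * n * rmt_gap n p"
  define r :: real where "r = 2 powr (- x)"
  define t where "t = -2 * \<alpha>"
  have "x > 0"
    using n gap by (simp add: x_def)
  then have r: "0 < r" "r < 1"
    by (simp_all add: r_def powr_less_one)
  obtain D K1 where D: "D > 0"
    and weight: "\<And>k. k \<ge> K1 \<Longrightarrow> (1 - min (ln ((l0 / 2^k) ^ n)) 0) powr t \<le> D * real k powr t"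
    using log_weight_dyadic_powr_le[OF n l0, of t] by blast
  obtain B where B: "B > 0" and tail: "\<forall>N\<ge>2. \<forall>K. finite K \<longrightarrow> K \<subseteq> {N - 1..} \<longrightarrow>
      (\<Sum>k\<in>K. r^k * real k powr t) \<le> B * (r^N * real N powr t)"
    using power_mult_powr_tail_sum_le[OF r, of t] by blast
  define C where "C = sqrt (l0 powr x * D * B)"
  have "l0 powr x * D * B > 0"
    using l0 D B by simp
  then have C: "C > 0" and C2: "C\<^sup>2 = l0 powr x * D * B"
    by (simp_all add: C_def)
  have "(\<Sum>k\<in>K. rmt_factor n p \<alpha> ((l0 / 2^k) ^ n))
       \<le> (C * (2 powr (- real N * n * rmt_gap n p) * real N powr (- \<alpha>)))\<^sup>2"
    if N: "N \<ge> K1 + 2" and K: "finite K" "K \<subseteq> {N - 1..}" for N K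
  proof -
    have "rmt_factor n p \<alpha> ((l0 / 2^k) ^ n) \<le> l0 powr x * D * (r^k * real k powr t)" if "k \<in> K" for k
    proof -
      have "rmt_factor n p \<alpha> ((l0 / 2^k) ^ n) = l0 powr x * r^k * (1 - min (ln ((l0 / 2^k) ^ n)) 0) powr t"
        using l0 by (simp add: rmt_factor_dyadic r_def x_def t_def)
      also have "\<dots> \<le> l0 powr x * r^k * (D * real k powr t)"
        using weight[of k] that K(2) N r by (intro mult_left_mono) auto
      finally show ?thesis
        by (simp add: mult_ac)
    qed
    then have "(\<Sum>k\<in>K. rmt_factor n p \<alpha> ((l0 / 2^k) ^ n))
        \<le> l0 powr x * D * (\<Sum>k\<in>K. r^k * real k powr t)"
      by (simp add: sum_distrib_left sum_mono)
    also have "\<dots> \<le> l0 powr x * D * (B * (r^N * real N powr t))"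
      using tail N K D by (intro mult_left_mono) auto
    also have "\<dots> = (C * (2 powr (- real N * n * rmt_gap n p) * real N powr (- \<alpha>)))\<^sup>2"
    proof -
      have power_of_powr: "(2 powr a) ^ m = 2 powr (a * m)" for a :: real and m :: nat
        by (simp add: powr_realpow[symmetric] powr_powr)
      have "r^N = (2 powr (- real N * n * rmt_gap n p))\<^sup>2"
        unfolding r_def power_of_powr by (simp add: x_def mult_ac)
      moreover have "real N powr t = (real N powr (- \<alpha>))\<^sup>2"
        by (simp add: t_def power2_eq_square flip: powr_add)
      ultimately show ?thesis
        by (simp add: C2 power_mult_distrib)
    qed
    finally show ?thesis .
  qed
  then show ?thesis
    using C by blast
qed

lemma rmt_factor_tail_sum_critical:
  fixes n :: nat and l0 p \<alpha> :: real
  assumes n: "n \<ge> 1" and l0: "l0 > 0" and gap: "rmt_gap n p = 0" and \<alpha>: "\<alpha> > 1/2"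
  shows "\<exists>C>0. \<exists>N0. \<forall>N\<ge>N0. \<forall>K. finite K \<longrightarrow> K \<subseteq> {N - 1..} \<longrightarrow>
     (\<Sum>k\<in>K. rmt_factor n p \<alpha> ((l0 / 2^k) ^ n)) \<le> (C * real N powr (1/2 - \<alpha>))\<^sup>2"
proof -
  define s where "s = 1 - 2 * \<alpha>"
  have s: "s < 0"
    using \<alpha> by (simp add: s_def)
  obtain D K1 where D: "D > 0" and weight: "\<And>k. k \<ge> K1 \<Longrightarrow>
      (1 - min (ln ((l0 / 2^k) ^ n)) 0) powr (s - 1) \<le> D * real k powr (s - 1)"
    using log_weight_dyadic_powr_le[OF n l0, of "s - 1"] by blast
  define C where "C = sqrt (D * (2 powr (- s) / (- s)))"
  have "D * (2 powr (- s) / (- s)) > 0"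
    using D s by (intro mult_pos_pos divide_pos_pos) auto
  then have C: "C > 0" and C2: "C\<^sup>2 = D * (2 powr (- s) / (- s))"
    by (simp_all add: C_def)
  have "(\<Sum>k\<in>K. rmt_factor n p \<alpha> ((l0 / 2^k) ^ n)) \<le> (C * real N powr (1/2 - \<alpha>))\<^sup>2"
    if N: "N \<ge> K1 + 4" and K: "finite K" "K \<subseteq> {N - 1..}" for N K
  proof -
    have "rmt_factor n p \<alpha> ((l0 / 2^k) ^ n) \<le> D * real k powr (s - 1)" if "k \<in> K" for k
    proof -
      have "rmt_factor n p \<alpha> ((l0 / 2^k) ^ n) = (1 - min (ln ((l0 / 2^k) ^ n)) 0) powr (s - 1)"
        using l0 gap by (simp add: rmt_factor_dyadic s_def)
      also have "\<dots> \<le> D * real k powr (s - 1)"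
        using that K(2) N by (intro weight) auto
      finally show ?thesis .
    qed
    then have "(\<Sum>k\<in>K. rmt_factor n p \<alpha> ((l0 / 2^k) ^ n)) \<le> D * (\<Sum>k\<in>K. real k powr (s - 1))"
      by (simp add: sum_distrib_left sum_mono)
    also have "\<dots> \<le> D * (2 powr (- s) / (- s) * real N powr s)"
      using powr_tail_sum_le_powr[OF s _ K] N D by (intro mult_left_mono) auto
    also have "\<dots> = C\<^sup>2 * real N powr s"
      by (simp add: C2)
    also have "\<dots> = (C * real N powr (1/2 - \<alpha>))\<^sup>2"
    proof -
      have "real N powr s = (real N powr (1/2 - \<alpha>))\<^sup>2"
        unfolding power2_eq_square powr_add[symmetric] by (simp add: s_def)
      then show ?thesis
        by (simp add: power_mult_distrib)
    qed
    finally show ?thesis .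
  qed
  then show ?thesis
    using C by blast
qed

lemma s_N_RMT_eventually_le:
  fixes a0 :: "real^'n" and g :: "nat \<Rightarrow> real"
  assumes l0: "l0 > 0" and g: "\<And>N. g N \<ge> 0"
    and tail: "\<exists>C>0. \<exists>N0. \<forall>N\<ge>N0. \<forall>K. finite K \<longrightarrow> K \<subseteq> {N - 1..} \<longrightarrow>
           (\<Sum>k\<in>K. rmt_factor (real CARD('n)) p \<alpha> ((l0 / 2^k) ^ CARD('n))) \<le> (C * g N)\<^sup>2"
  shows "\<exists>C>0. \<exists>N0. \<forall>N\<ge>N0. s_N_RMT a0 l0 p \<alpha> N \<le> ennreal (C * g N)"
proof -
  obtain C N0 where C: "C > 0" and "\<forall>N\<ge>N0. \<forall>K. finite K \<longrightarrow> K \<subseteq> {N - 1..} \<longrightarrow>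
           (\<Sum>k\<in>K. rmt_factor (real CARD('n)) p \<alpha> ((l0 / 2^k) ^ CARD('n))) \<le> (C * g N)\<^sup>2"
    using tail by blast
  then have "s_N_RMT a0 l0 p \<alpha> N \<le> ennreal (C * g N)" if "N \<ge> N0" for N
    using that g[of N] by (intro s_N_RMT_le_of_rmt_factor_tail_bound[OF l0]) auto
  then show ?thesis
    using C by blast
qed

theorem proposition5p3:
  fixes a0 :: "real^'n" and l0 p \<alpha> :: real
  assumes "CARD('n) \<ge> 2" and "l0 > 0"
  shows "(p > 2 * real CARD('n) / (real CARD('n) + 2) \<longrightarrow>
            (\<exists>C>0. \<exists>N0. \<forall>N\<ge>N0. s_N_RMT a0 l0 p \<alpha> N \<le>
               ennreal (C * 2 powr (- real N * real CARD('n)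
                          * ((real CARD('n) + 2) / (2 * real CARD('n)) - 1 / p))
                         * real N powr (- \<alpha>))))
       \<and> (p = 2 * real CARD('n) / (real CARD('n) + 2) \<and> \<alpha> > 1/2 \<longrightarrow>
            (\<exists>C>0. \<exists>N0. \<forall>N\<ge>N0. s_N_RMT a0 l0 p \<alpha> N \<le>
               ennreal (C * real N powr (1/2 - \<alpha>))))"
proof (intro conjI impI)
  let ?n = "real CARD('n)"
  have n: "CARD('n) \<ge> 1"
    using assms(1) by simp
  show "\<exists>C>0. \<exists>N0. \<forall>N\<ge>N0. s_N_RMT a0 l0 p \<alpha> N \<le>
      ennreal (C * 2 powr (- real N * ?n * ((?n + 2) / (2 * ?n) - 1 / p)) * real N powr (- \<alpha>))"
    if "p > 2 * ?n / (?n + 2)"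
  proof -
    have "2 * ?n / (?n + 2) \<ge> 0"
      by simp
    then have "p > 0"
      using that by linarith
    then have "rmt_gap ?n p > 0"
      using that n by (simp add: rmt_gap_def field_simps)
    from s_N_RMT_eventually_le[OF assms(2) _ rmt_factor_tail_sum_supercritical[OF n assms(2) this]]
    show ?thesis
      by (simp add: rmt_gap_def mult.assoc)
  qed
  show "\<exists>C>0. \<exists>N0. \<forall>N\<ge>N0. s_N_RMT a0 l0 p \<alpha> N \<le> ennreal (C * real N powr (1/2 - \<alpha>))"
    if "p = 2 * ?n / (?n + 2) \<and> \<alpha> > 1/2"
  proof -
    have "1 / p = (?n + 2) / (2 * ?n)"
      using that by simp
    then have "rmt_gap ?n p = 0"
      by (simp add: rmt_gap_def)
    with that show ?thesis
      by (intro s_N_RMT_eventually_le[OF assms(2)] rmt_factor_tail_sum_critical[OF n assms(2)]) auto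
  qed
qed

end
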